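(* Let $S,I:\mathbb{R}\to\mathbb{R}$ be $2\pi$-periodic Lipschitz functions and suppose there are $\alpha_0\in(0,\pi)$, $p,q\ge1$, $c_1,c_2>0$, $c_3\in(0,1]$ with $S(\theta)\le-c_1(\pi-\theta)^p$ for $\theta\in[\alpha_0,\pi]$, $S(\theta)\ge c_1(\theta+\pi)^p$ for $\theta\in[-\pi,-\alpha_0]$, $0\le I(\theta)\le c_2(\pi-|\theta|)^q$ for $\theta\in[-\pi,\pi]$, and $\min_{|\phi|\le\max\{|\theta|,\alpha_0\}}I(\phi)\ge c_3I(\theta)$ for $\theta\in[-\pi,\pi]$. Let $(\theta_i(t))$ solve $\dot\theta_i=\omega_i+\frac{\kappa}{N}\sum_{j=1}^NI(\theta_j)S(\theta_i)$, $\theta_i(0)=\theta_i^0$, and $R(t)=\frac1N\sum_jI(\theta_j(t))$. For $\mathcal B\subseteq\{1,\dots,N\}$ let $\|\Omega_{\mathcal B}\|_\infty=\max_{i\in\mathcal B}|\omega_i|$. Suppose $0<\rho\le\|I\|_{\sup}$ and $\mathcal A\subset\mathcal B\subset\{1,\dots,N\}$ satisfy \[ \frac1N\sum_{i\in\mathcal A}I(\theta_i^0)>\frac{\rho}{c_3},\qquad\kappa>\frac{\|\Omega_{\mathcal B}\|_\infty}{\rho c_1(\pi-\alpha_0)^p}, \] and, with $d=\left(\frac{\|\Omega_{\mathcal B}\|_\infty}{\kappa\rho c_1}\right)^{1/p}$, $\theta_i^0\in[-\pi+d,\pi-d]$ for all $i\in\mathcal A$. Then (a) $R(t)>\rho$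 for $t\ge0$; (b) $\theta_i(t)\in[-\pi+d,\pi-d]$ for $i\in\mathcal A$ and $t\ge0$; (c) $\sup_{t\ge0}\theta_i(t)-\inf_{t\ge0}\theta_i(t)<2\pi$ for $i\in\mathcal B$.
   Context: $\|I\|_{\sup}=\sup|I|$. *)

theory Defs
  imports "HOL-Analysis.Analysis"
begin

end

theory Submission
  imports Defs "HOL-Library.Periodic_Fun"
begin

(* As long as the order parameter R stays above rho, each oscillator of A sits in a band
   [-m_i, m_i] with m_i = max |theta_i(0)| alpha0 <= pi - d, at whose edges the drift
   omega_i + kappa R S points inwards; since S is Lipschitz, a comparison argument keeps the
   phase in the band. Conversely, while the phases of A stay in their bands, the hypothesis on
   min I bounds R from below by c3 times the initial mass of A, which exceeds rho. A continuity
   argument on [0, oo) closes this loop and gives (a) and (b).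
   With R > rho for all time, the drift is negative at every alpha0 + 2 pi k and positive at
   every -alpha0 + 2 pi k, for each oscillator of B. These interleaved barriers cannot be crossed
   upwards resp. downwards, which traps every trajectory in a window of width less than 2 pi. *)

lemma continuous_on_last_le:
  fixes f :: "real \<Rightarrow> real"
  assumes cont: "continuous_on {a..b} f" and "a \<le> b" "f a \<le> c" "c < f b"
  shows "\<exists>s\<in>{a..<b}. f s \<le> c \<and> (\<forall>u\<in>{s<..b}. c < f u)"
proof -
  define K where "K = {a..b} \<inter> f -` {..c}"
  have "closed K"
    unfolding K_def using cont by (intro continuous_closed_preimage) auto
  moreover have "a \<in> K" "bdd_above K"
    using assms by (auto simp: K_def bdd_above_def)
  ultimately have "Sup K \<in> K"
    using closed_contains_Sup by blast
  moreover have "c < f u" if "Sup K < u" "u \<le> b" for u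
    using cSup_upper[OF _ \<open>bdd_above K\<close>, of u] that \<open>a \<in> K\<close> cSup_upper[OF \<open>a \<in> K\<close> \<open>bdd_above K\<close>]
    by (force simp: K_def)
  ultimately show ?thesis
    using \<open>c < f b\<close> by (intro bexI[of _ "Sup K"]) (auto simp: K_def order.order_iff_strict)
qed

lemma differential_inequality_le:
  fixes f f' :: "real \<Rightarrow> real"
  assumes der: "\<And>u. t0 \<le> u \<Longrightarrow> u \<le> t \<Longrightarrow> (f has_real_derivative f' u) (at u within {t0..t})"
    and ineq: "\<And>u. t0 \<le> u \<Longrightarrow> u \<le> t \<Longrightarrow> c \<le> f u \<Longrightarrow> f' u \<le> C * (f u - c)"
    and "f t0 \<le> c" "t0 \<le> t"
  shows "f t \<le> c"
proof (rule ccontr)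
  assume "\<not> f t \<le> c"
  have cont: "continuous_on {t0..t} f"
    using der by (metis DERIV_continuous atLeastAtMost_iff continuous_on_eq_continuous_within)
  obtain s where s: "t0 \<le> s" "s < t" "f s \<le> c" and above: "\<And>u. s < u \<Longrightarrow> u \<le> t \<Longrightarrow> c < f u"
    using continuous_on_last_le[OF cont \<open>t0 \<le> t\<close> \<open>f t0 \<le> c\<close>] \<open>\<not> f t \<le> c\<close> by fastforce
  \<comment> \<open>on the last excursion of f above c, (f - c) e^(-C x) cannot increase\<close>
  define v where "v x = (f x - c) * exp (- C * x)" for x
  have "v t \<le> v s"
  proof (rule DERIV_nonpos_imp_decreasing_open[OF less_imp_le[OF \<open>s < t\<close>]])
    fix x assume x: "s < x" "x < t"
    then have "(f has_real_derivative f' x) (at x)"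
      using der[of x] s by (simp add: at_within_Icc_at)
    then have "(v has_real_derivative (f' x - C * (f x - c)) * exp (- C * x)) (at x)"
      unfolding v_def by (auto intro!: derivative_eq_intros simp: algebra_simps)
    moreover have "f' x - C * (f x - c) \<le> 0"
      using ineq[of x] above[of x] x s by simp
    ultimately show "\<exists>y. (v has_real_derivative y) (at x) \<and> y \<le> 0"
      by (intro exI conjI) (auto simp: mult_nonpos_nonneg)
  next
    show "continuous_on {s..t} v"
      unfolding v_def using s by (intro continuous_intros continuous_on_subset[OF cont]) auto
  qed
  moreover have "v s \<le> 0" "0 < v t"
    using s \<open>\<not> f t \<le> c\<close> by (simp_all add: v_def mult_nonpos_nonneg)
  ultimately show False by simp
qed

lemma differential_inequality_ge:
  fixes f f' :: "real \<Rightarrow> real"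
  assumes der: "\<And>u. t0 \<le> u \<Longrightarrow> u \<le> t \<Longrightarrow> (f has_real_derivative f' u) (at u within {t0..t})"
    and ineq: "\<And>u. t0 \<le> u \<Longrightarrow> u \<le> t \<Longrightarrow> f u \<le> c \<Longrightarrow> C * (f u - c) \<le> f' u"
    and "c \<le> f t0" "t0 \<le> t"
  shows "c \<le> f t"
proof -
  have "- f t \<le> - c"
  proof (rule differential_inequality_le[where f = "\<lambda>x. - f x" and f' = "\<lambda>u. - f' u" and c = "- c" and C = C])
    show "((\<lambda>x. - f x) has_real_derivative - f' u) (at u within {t0..t})" if "t0 \<le> u" "u \<le> t" for u
      using DERIV_minus[OF der[OF that]] by simp
    show "- f' u \<le> C * (- f u - - c)" if "t0 \<le> u" "u \<le> t" "- c \<le> - f u" for u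
      using ineq[of u] that by (simp add: algebra_simps)
  qed (use assms in simp_all)
  then show ?thesis by simp
qed

lemma nonneg_real_induct:
  fixes P :: "real \<Rightarrow> bool"
  assumes "P 0"
    and left: "\<And>T. 0 < T \<Longrightarrow> (\<And>s. 0 \<le> s \<Longrightarrow> s < T \<Longrightarrow> P s) \<Longrightarrow> P T"
    and right: "\<And>T. 0 \<le> T \<Longrightarrow> P T \<Longrightarrow> \<exists>\<delta>>0. \<forall>t. T \<le> t \<and> t \<le> T + \<delta> \<longrightarrow> P t"
    and "0 \<le> t"
  shows "P t"
proof (rule ccontr)
  assume "\<not> P t"
  define Z where "Z = {s. 0 \<le> s \<and> \<not> P s}"
  have Z: "Z \<noteq> {}" "bdd_below Z"
    using \<open>0 \<le> t\<close> \<open>\<not> P t\<close> by (auto simp: Z_def bdd_below_def)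
  have "0 \<le> Inf Z"
    using Z by (intro cInf_greatest) (auto simp: Z_def)
  have "P s" if "0 \<le> s" "s < Inf Z" for s
    using cInf_lower[OF _ \<open>bdd_below Z\<close>, of s] that by (force simp: Z_def)
  then have "P (Inf Z)"
    using \<open>P 0\<close> left \<open>0 \<le> Inf Z\<close> by (cases "Inf Z = 0") auto
  then obtain \<delta> where "\<delta> > 0" and \<delta>: "\<And>t. Inf Z \<le> t \<Longrightarrow> t \<le> Inf Z + \<delta> \<Longrightarrow> P t"
    using right \<open>0 \<le> Inf Z\<close> by blast
  obtain z where "z \<in> Z" "z < Inf Z + \<delta>"
    using cInf_less_iff[OF Z, of "Inf Z + \<delta>"] \<open>\<delta> > 0\<close> by auto
  moreover have "Inf Z \<le> z"
    using cInf_lower[OF \<open>z \<in> Z\<close> \<open>bdd_below Z\<close>] .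
  ultimately show False
    using \<delta> by (auto simp: Z_def)
qed

lemma continuous_on_le_at_right_end:
  fixes g :: "real \<Rightarrow> real"
  assumes "continuous_on {a..b} g" "a < b" "\<And>s. a \<le> s \<Longrightarrow> s < b \<Longrightarrow> g s \<le> m"
  shows "g b \<le> m"
proof -
  have "g ` closure {a..<b} \<subseteq> {..m}"
    using assms by (intro image_closure_subset) auto
  then show ?thesis
    using \<open>a < b\<close> by (simp add: image_subset_iff)
qed

lemma continuous_on_gt_on_right_interval:
  fixes g :: "real \<Rightarrow> real"
  assumes "continuous_on {a..} g" "a \<le> T" "c < g T"
  shows "\<exists>\<delta>>0. \<forall>t. T \<le> t \<and> t \<le> T + \<delta> \<longrightarrow> c < g t"
proof -
  have "continuous (at T within {a..}) g"
    using assms continuous_on_eq_continuous_within by auto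
  then obtain \<epsilon> where "\<epsilon> > 0" and \<epsilon>: "\<And>t. t \<in> {a..} \<Longrightarrow> dist t T < \<epsilon> \<Longrightarrow> dist (g t) (g T) < g T - c"
    using \<open>c < g T\<close> unfolding continuous_within_eps_delta by (metis diff_gt_0_iff_gt)
  have "c < g t" if "T \<le> t" "t \<le> T + \<epsilon> / 2" for t
    using \<epsilon>[of t] that \<open>a \<le> T\<close> \<open>\<epsilon> > 0\<close> by (auto simp: dist_real_def)
  then show ?thesis
    using \<open>\<epsilon> > 0\<close> by (intro exI[of _ "\<epsilon> / 2"]) auto
qed

definition upper_barrier :: "(real \<Rightarrow> real) \<Rightarrow> real \<Rightarrow> bool" where
  "upper_barrier f u \<longleftrightarrow> (\<forall>s t. 0 \<le> s \<longrightarrow> s \<le> t \<longrightarrow> f s \<le> u \<longrightarrow> f t \<le> u)"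

definition lower_barrier :: "(real \<Rightarrow> real) \<Rightarrow> real \<Rightarrow> bool" where
  "lower_barrier f l \<longleftrightarrow> (\<forall>s t. 0 \<le> s \<longrightarrow> s \<le> t \<longrightarrow> l \<le> f s \<longrightarrow> l \<le> f t)"

lemma upper_barrierD: "upper_barrier f u \<Longrightarrow> 0 \<le> s \<Longrightarrow> s \<le> t \<Longrightarrow> f s \<le> u \<Longrightarrow> f t \<le> u"
  unfolding upper_barrier_def by blast

lemma lower_barrierD: "lower_barrier f l \<Longrightarrow> 0 \<le> s \<Longrightarrow> s \<le> t \<Longrightarrow> l \<le> f s \<Longrightarrow> l \<le> f t"
  unfolding lower_barrier_def by blast

lemma upper_barrier_uminus: "upper_barrier (\<lambda>t. - f t) (- l) \<longleftrightarrow> lower_barrier f l"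
  by (auto simp: upper_barrier_def lower_barrier_def)

lemma lower_barrier_uminus: "lower_barrier (\<lambda>t. - f t) (- u) \<longleftrightarrow> upper_barrier f u"
  by (auto simp: upper_barrier_def lower_barrier_def)

lemma uniformly_below_after_upper_barrier:
  fixes f :: "real \<Rightarrow> real"
  assumes cont: "continuous_on {0..} f"
    and "upper_barrier f u" "lower_barrier f v" "u < v" "0 \<le> t0" "f t0 \<le> u"
  shows "\<exists>b<v. \<forall>t\<ge>0. f t \<le> b"
proof -
  obtain s where s: "s \<in> {0..t0}" and max: "\<And>t. t \<in> {0..t0} \<Longrightarrow> f t \<le> f s"
    using continuous_attains_sup[OF compact_Icc _ continuous_on_subset[OF cont], of 0 t0] \<open>0 \<le> t0\<close>
    by auto
  have "f s < v"
  proof (rule ccontr)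
    assume "\<not> f s < v"
    then have "v \<le> f t0"
      using lower_barrierD[OF \<open>lower_barrier f v\<close>] s by auto
    then show False
      using \<open>f t0 \<le> u\<close> \<open>u < v\<close> by simp
  qed
  moreover have "f t \<le> max (f s) u" if "0 \<le> t" for t
    using max[of t] upper_barrierD[OF \<open>upper_barrier f u\<close> \<open>0 \<le> t0\<close>, of t] assms that
    by (cases "t \<le> t0") auto
  ultimately show ?thesis
    using \<open>u < v\<close> by (intro exI[of _ "max (f s) u"]) auto
qed

lemma oscillation_between_barriers:
  fixes f :: "real \<Rightarrow> real"
  assumes cont: "continuous_on {0..} f"
    and barriers: "lower_barrier f l0" "upper_barrier f u0" "lower_barrier f l1" "upper_barrier f u1"
    and "u0 < l1" "l1 < u1" and f0: "l0 \<le> f 0" "f 0 < l1"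
    and widths: "l1 - l0 \<le> w" "u1 - u0 \<le> w" "l1 - u0 < w"
  shows "\<exists>a b. b - a < w \<and> (\<forall>t\<ge>0. a \<le> f t \<and> f t \<le> b)"
proof -
  have above: "l0 \<le> f t" if "0 \<le> t" for t
    using lower_barrierD[OF barriers(1) order_refl that f0(1)] .
  have below: "f t \<le> u1" if "0 \<le> t" for t
    using upper_barrierD[OF barriers(4) order_refl that] f0 \<open>l1 < u1\<close> by simp
  consider (down) t0 where "0 \<le> t0" "f t0 \<le> u0" | (rise) t0 where "0 \<le> t0" "l1 \<le> f t0"
    | (between) "\<forall>t\<ge>0. u0 < f t \<and> f t < l1"
    by (meson not_le)
  then show ?thesis
  proof cases
    case down
    then obtain b where "b < l1" "\<forall>t\<ge>0. f t \<le> b"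
      using uniformly_below_after_upper_barrier[OF cont barriers(2,3) \<open>u0 < l1\<close>] by blast
    then show ?thesis
      using above widths by (intro exI[of _ l0] exI[of _ b]) auto
  next
    case rise
    have "continuous_on {0..} (\<lambda>t. - f t)"
      using cont by (rule continuous_on_minus)
    then obtain b where "b < - u0" "\<forall>t\<ge>0. - f t \<le> b"
      using uniformly_below_after_upper_barrier[of "\<lambda>t. - f t" "- l1" "- u0"] rise
        barriers(2,3) \<open>u0 < l1\<close> by (auto simp: upper_barrier_uminus lower_barrier_uminus)
    then have "\<forall>t\<ge>0. - b \<le> f t \<and> f t \<le> u1" "u1 - - b < w"
      using below widths by auto
    then show ?thesis
      by blast
  next
    case between
    then have "\<forall>t\<ge>0. u0 \<le> f t \<and> f t \<le> l1"
      by (auto intro: less_imp_le)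
    then show ?thesis
      using widths by blast
  qed
qed

lemma oscillation_between_periodic_barriers:
  fixes f :: "real \<Rightarrow> real"
  assumes cont: "continuous_on {0..} f" and "0 < \<alpha>" "\<alpha> < pi"
    and up: "\<And>k::int. upper_barrier f (\<alpha> + of_int k * (2 * pi))"
    and low: "\<And>k::int. lower_barrier f (- \<alpha> + of_int k * (2 * pi))"
  shows "\<exists>a b. b - a < 2 * pi \<and> (\<forall>t\<ge>0. a \<le> f t \<and> f t \<le> b)"
proof -
  define k where "k = \<lfloor>(f 0 + \<alpha>) / (2 * pi)\<rfloor>"
  have "of_int k \<le> (f 0 + \<alpha>) / (2 * pi)" "(f 0 + \<alpha>) / (2 * pi) < of_int k + 1"
    unfolding k_def by linarith+
  then have "- \<alpha> + of_int k * (2 * pi) \<le> f 0" "f 0 < - \<alpha> + of_int (k + 1) * (2 * pi)"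
    by (simp_all add: field_simps)
  then show ?thesis
    using \<open>0 < \<alpha>\<close> \<open>\<alpha> < pi\<close>
    by (intro oscillation_between_barriers[OF cont low[of k] up[of k] low[of "k + 1"] up[of "k + 1"]])
      (simp_all add: algebra_simps)
qed

lemma SUP_minus_INF_less:
  fixes f :: "'a \<Rightarrow> real"
  assumes "T \<noteq> {}" "\<And>t. t \<in> T \<Longrightarrow> a \<le> f t \<and> f t \<le> b" "b - a < w"
  shows "bdd_above (f ` T) \<and> bdd_below (f ` T) \<and> (SUP t\<in>T. f t) - (INF t\<in>T. f t) < w"
proof -
  have "bdd_above (f ` T)" "bdd_below (f ` T)"
    using assms(2) by (auto simp: bdd_above_def bdd_below_def)
  moreover have "(SUP t\<in>T. f t) \<le> b" "a \<le> (INF t\<in>T. f t)"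
    using assms(1,2) by (auto intro!: cSUP_least cINF_greatest)
  ultimately show ?thesis
    using assms(3) by linarith
qed

lemma periodic_range_eq:
  fixes f :: "real \<Rightarrow> 'a"
  assumes "\<And>x. f (x + 2 * pi) = f x"
  shows "range f = f ` {-pi..pi}"
proof -
  interpret periodic_fun_simple f "2 * pi"
    by unfold_locales (rule assms)
  have "f x \<in> f ` {-pi..pi}" for x
  proof -
    define k where "k = \<lfloor>(x + pi) / (2 * pi)\<rfloor>"
    have "of_int k \<le> (x + pi) / (2 * pi)" "(x + pi) / (2 * pi) < of_int k + 1"
      unfolding k_def by linarith+
    then have "x + of_int (- k) * (2 * pi) \<in> {-pi..pi}"
      by (simp add: field_simps)
    moreover have "f (x + of_int (- k) * (2 * pi)) = f x"
      by (rule plus_of_int)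
    ultimately show ?thesis
      by (metis image_eqI)
  qed
  then show ?thesis by blast
qed

lemma restoring_drift_le:
  fixes w a a0 s z :: real
  assumes "z \<le> - s" "0 \<le> s" "0 \<le> a0" "a0 \<le> a" "\<bar>w\<bar> \<le> a0 * s"
  shows "w + a * z \<le> 0"
proof -
  have "a0 * s \<le> a * s"
    using assms by (intro mult_right_mono)
  moreover have "a * z \<le> a * (- s)"
    using assms by (intro mult_left_mono) auto
  ultimately show ?thesis
    using assms(5) by linarith
qed

lemma restoring_drift_ge:
  fixes w a a0 s z :: real
  assumes "s \<le> z" "0 \<le> s" "0 \<le> a0" "a0 \<le> a" "\<bar>w\<bar> \<le> a0 * s"
  shows "0 \<le> w + a * z"
  using restoring_drift_le[of "- z" s a0 a "- w"] assms by simp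

lemma mean_gt_of_shrunk_phases:
  fixes I :: "real \<Rightarrow> real" and x y :: "nat \<Rightarrow> real"
  assumes I_nonneg: "\<And>z. 0 \<le> I z"
    and I_min: "\<And>x \<phi>. - pi \<le> x \<Longrightarrow> x \<le> pi \<Longrightarrow> \<bar>\<phi>\<bar> \<le> max \<bar>x\<bar> \<alpha>0 \<Longrightarrow> I \<phi> \<ge> c3 * I x"
    and "0 < c3" "A \<subseteq> {1..N}"
    and mass: "1 / real N * (\<Sum>i\<in>A. I (x i)) > \<rho> / c3"
    and x: "\<And>i. i \<in> A \<Longrightarrow> - pi \<le> x i \<and> x i \<le> pi"
    and y: "\<And>i. i \<in> A \<Longrightarrow> \<bar>y i\<bar> \<le> max \<bar>x i\<bar> \<alpha>0"
  shows "1 / real N * (\<Sum>j\<in>{1..N}. I (y j)) > \<rho>"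
proof -
  have "c3 * (\<Sum>i\<in>A. I (x i)) \<le> (\<Sum>i\<in>A. I (y i))"
    unfolding sum_distrib_left using I_min x y by (intro sum_mono) auto
  also have "\<dots> \<le> (\<Sum>j\<in>{1..N}. I (y j))"
    using \<open>A \<subseteq> {1..N}\<close> I_nonneg by (intro sum_mono2) auto
  finally have "c3 * (1 / real N * (\<Sum>i\<in>A. I (x i))) \<le> 1 / real N * (\<Sum>j\<in>{1..N}. I (y j))"
    by (simp add: divide_right_mono)
  moreover have "\<rho> < c3 * (1 / real N * (\<Sum>i\<in>A. I (x i)))"
    using mass \<open>0 < c3\<close> by (simp add: field_simps)
  ultimately show ?thesis
    by linarith
qed

lemma powr_inverse_le:
  fixes x D p :: real
  assumes "0 \<le> x" "0 \<le> D" "0 < p" "x \<le> D powr p"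
  shows "x powr (1 / p) \<le> D"
proof -
  have "x powr (1 / p) \<le> (D powr p) powr (1 / p)"
    using assms by (intro powr_mono2) auto
  then show ?thesis
    using assms by (simp add: powr_powr)
qed

locale phase_model =
  fixes S I :: "real \<Rightarrow> real" and N :: nat and \<omega> :: "nat \<Rightarrow> real"
    and \<theta> :: "nat \<Rightarrow> real \<Rightarrow> real" and \<kappa> :: real
  assumes S_lipschitz: "\<exists>L. L-lipschitz_on UNIV S"
    and I_continuous: "continuous_on UNIV I"
    and I_nonneg: "\<And>x. 0 \<le> I x"
    and I_bounded: "bdd_above (range I)"
    and \<kappa>_nonneg: "0 \<le> \<kappa>"
    and ode: "\<And>i t. i \<in> {1..N} \<Longrightarrow> 0 \<le> t \<Longrightarrow>
      (\<theta> i has_real_derivative (\<omega> i + \<kappa> / real N * (\<Sum>j\<in>{1..N}. I (\<theta> j t)) * S (\<theta> i t)))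
        (at t within {0..})"
begin

definition R :: "real \<Rightarrow> real" where
  "R t = 1 / real N * (\<Sum>j\<in>{1..N}. I (\<theta> j t))"

lemma R_nonneg: "0 \<le> R t"
  unfolding R_def using I_nonneg by (simp add: sum_nonneg)

lemma R_le_Sup: "R t \<le> (SUP x. I x)"
proof (cases "N = 0")
  case True
  have "I 0 \<le> (SUP x. I x)"
    using cSUP_upper[OF UNIV_I I_bounded] .
  then show ?thesis
    unfolding R_def using True I_nonneg[of 0] by simp
next
  case False
  have "(\<Sum>j\<in>{1..N}. I (\<theta> j t)) \<le> (\<Sum>j\<in>{1..N}. (SUP x. I x))"
    using I_bounded by (intro sum_mono cSUP_upper) auto
  then show ?thesis
    using False by (simp add: R_def field_simps)
qed

lemma phase_has_derivative:
  "i \<in> {1..N} \<Longrightarrow> 0 \<le> t \<Longrightarrow>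
    (\<theta> i has_real_derivative (\<omega> i + \<kappa> * R t * S (\<theta> i t))) (at t within {0..})"
  using ode by (simp add: R_def)

lemma continuous_on_phase: "i \<in> {1..N} \<Longrightarrow> continuous_on {0..} (\<theta> i)"
  using phase_has_derivative
  by (metis DERIV_continuous atLeast_iff continuous_on_eq_continuous_within)

lemma continuous_on_R: "continuous_on {0..} R"
  unfolding R_def
  by (intro continuous_intros continuous_on_compose2[OF I_continuous] continuous_on_phase) auto

lemma phase_upper_barrier:
  assumes "i \<in> {1..N}" "0 \<le> t0" "t0 \<le> t" "\<theta> i t0 \<le> c"
    and drift: "\<And>u. t0 \<le> u \<Longrightarrow> u \<le> t \<Longrightarrow> \<omega> i + \<kappa> * R u * S c \<le> 0"
  shows "\<theta> i t \<le> c"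
proof -
  obtain L where L: "L-lipschitz_on UNIV S"
    using S_lipschitz by blast
  show ?thesis
  proof (rule differential_inequality_le[where f = "\<theta> i" and C = "\<kappa> * (SUP x. I x) * L"
        and f' = "\<lambda>u. \<omega> i + \<kappa> * R u * S (\<theta> i u)"])
    show "(\<theta> i has_real_derivative \<omega> i + \<kappa> * R u * S (\<theta> i u)) (at u within {t0..t})"
      if "t0 \<le> u" "u \<le> t" for u
      using phase_has_derivative[OF \<open>i \<in> {1..N}\<close>, of u] that assms by (auto intro: DERIV_subset)
    show "\<omega> i + \<kappa> * R u * S (\<theta> i u) \<le> \<kappa> * (SUP x. I x) * L * (\<theta> i u - c)"
      if "t0 \<le> u" "u \<le> t" "c \<le> \<theta> i u" for u
    proof -
      have "S (\<theta> i u) \<le> S c + L * (\<theta> i u - c)"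
        using lipschitz_onD[OF L, of "\<theta> i u" c] that by (simp add: dist_real_def abs_le_iff)
      then have "\<kappa> * R u * S (\<theta> i u) \<le> \<kappa> * R u * S c + \<kappa> * R u * (L * (\<theta> i u - c))"
        using \<kappa>_nonneg R_nonneg by (simp add: mult_left_mono flip: distrib_left)
      moreover have "\<kappa> * R u * (L * (\<theta> i u - c)) \<le> \<kappa> * (SUP x. I x) * (L * (\<theta> i u - c))"
        using \<kappa>_nonneg R_le_Sup lipschitz_on_nonneg[OF L] that
        by (intro mult_right_mono mult_left_mono) auto
      ultimately show ?thesis
        using drift[OF that(1,2)] by (simp add: mult.assoc)
    qed
  qed (use assms in auto)
qed

lemma phase_lower_barrier:
  assumes "i \<in> {1..N}" "0 \<le> t0" "t0 \<le> t" "c \<le> \<theta> i t0"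
    and drift: "\<And>u. t0 \<le> u \<Longrightarrow> u \<le> t \<Longrightarrow> 0 \<le> \<omega> i + \<kappa> * R u * S c"
  shows "c \<le> \<theta> i t"
proof -
  obtain L where L: "L-lipschitz_on UNIV S"
    using S_lipschitz by blast
  show ?thesis
  proof (rule differential_inequality_ge[where f = "\<theta> i" and C = "\<kappa> * (SUP x. I x) * L"
        and f' = "\<lambda>u. \<omega> i + \<kappa> * R u * S (\<theta> i u)"])
    show "(\<theta> i has_real_derivative \<omega> i + \<kappa> * R u * S (\<theta> i u)) (at u within {t0..t})"
      if "t0 \<le> u" "u \<le> t" for u
      using phase_has_derivative[OF \<open>i \<in> {1..N}\<close>, of u] that assms by (auto intro: DERIV_subset)
    show "\<kappa> * (SUP x. I x) * L * (\<theta> i u - c) \<le> \<omega> i + \<kappa> * R u * S (\<theta> i u)"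
      if "t0 \<le> u" "u \<le> t" "\<theta> i u \<le> c" for u
    proof -
      have "S c - L * (c - \<theta> i u) \<le> S (\<theta> i u)"
        using lipschitz_onD[OF L, of c "\<theta> i u"] that by (simp add: dist_real_def abs_le_iff)
      then have "\<kappa> * R u * S c - \<kappa> * R u * (L * (c - \<theta> i u)) \<le> \<kappa> * R u * S (\<theta> i u)"
        using \<kappa>_nonneg R_nonneg by (simp add: mult_left_mono flip: right_diff_distrib)
      moreover have "\<kappa> * R u * (L * (c - \<theta> i u)) \<le> \<kappa> * (SUP x. I x) * (L * (c - \<theta> i u))"
        using \<kappa>_nonneg R_le_Sup lipschitz_on_nonneg[OF L] that
        by (intro mult_right_mono mult_left_mono) auto
      ultimately show ?thesis
        using drift[OF that(1,2)] by (simp add: algebra_simps)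
    qed
  qed (use assms in auto)
qed

lemma phase_abs_barrier:
  assumes "i \<in> {1..N}" "0 \<le> t0" "t0 \<le> t" "\<bar>\<theta> i t0\<bar> \<le> m"
    and drift: "\<And>u. t0 \<le> u \<Longrightarrow> u \<le> t \<Longrightarrow> \<omega> i + \<kappa> * R u * S m \<le> 0 \<and> 0 \<le> \<omega> i + \<kappa> * R u * S (- m)"
  shows "\<bar>\<theta> i t\<bar> \<le> m"
proof -
  have "\<theta> i t \<le> m"
    using drift \<open>\<bar>\<theta> i t0\<bar> \<le> m\<close> by (intro phase_upper_barrier[OF assms(1-3)]) auto
  moreover have "- m \<le> \<theta> i t"
    using drift \<open>\<bar>\<theta> i t0\<bar> \<le> m\<close> by (intro phase_lower_barrier[OF assms(1-3)]) auto
  ultimately show ?thesis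
    by simp
qed

lemma phase_confinement:
  assumes "A \<subseteq> {1..N}"
    and init: "\<And>i. i \<in> A \<Longrightarrow> \<bar>\<theta> i 0\<bar> \<le> m i"
    and coherent: "\<And>t. 0 \<le> t \<Longrightarrow> (\<forall>i\<in>A. \<bar>\<theta> i t\<bar> \<le> m i) \<Longrightarrow> \<rho> < R t"
    and drift: "\<And>i r. i \<in> A \<Longrightarrow> \<rho> \<le> r \<Longrightarrow> \<omega> i + \<kappa> * r * S (m i) \<le> 0 \<and> 0 \<le> \<omega> i + \<kappa> * r * S (- m i)"
    and "0 \<le> t"
  shows "\<forall>i\<in>A. \<bar>\<theta> i t\<bar> \<le> m i"
proof (rule nonneg_real_induct[where P = "\<lambda>t. \<forall>i\<in>A. \<bar>\<theta> i t\<bar> \<le> m i", OF _ _ _ \<open>0 \<le> t\<close>])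
  show "\<forall>i\<in>A. \<bar>\<theta> i 0\<bar> \<le> m i"
    using init by blast
next
  fix T :: real
  assume "0 < T" and before: "\<And>s. 0 \<le> s \<Longrightarrow> s < T \<Longrightarrow> \<forall>i\<in>A. \<bar>\<theta> i s\<bar> \<le> m i"
  show "\<forall>i\<in>A. \<bar>\<theta> i T\<bar> \<le> m i"
  proof
    fix i assume "i \<in> A"
    then have "continuous_on {0..} (\<theta> i)"
      using continuous_on_phase \<open>A \<subseteq> {1..N}\<close> by blast
    then have "continuous_on {0..T} (\<lambda>t. \<bar>\<theta> i t\<bar>)"
      by (rule continuous_on_rabs[OF continuous_on_subset]) auto
    moreover have "\<bar>\<theta> i s\<bar> \<le> m i" if "0 \<le> s" "s < T" for s
      using before[OF that] \<open>i \<in> A\<close> by blast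
    ultimately show "\<bar>\<theta> i T\<bar> \<le> m i"
      by (rule continuous_on_le_at_right_end[OF _ \<open>0 < T\<close>])
  qed
next
  fix T :: real
  assume "0 \<le> T" and at_T: "\<forall>i\<in>A. \<bar>\<theta> i T\<bar> \<le> m i"
  obtain \<delta> where "\<delta> > 0" and R_gt: "\<And>t. T \<le> t \<Longrightarrow> t \<le> T + \<delta> \<Longrightarrow> \<rho> < R t"
    using continuous_on_gt_on_right_interval[OF continuous_on_R \<open>0 \<le> T\<close> coherent[OF \<open>0 \<le> T\<close> at_T]]
    by blast
  have "\<bar>\<theta> i t\<bar> \<le> m i" if "i \<in> A" "T \<le> t" "t \<le> T + \<delta>" for i t
    using that at_T \<open>0 \<le> T\<close> \<open>A \<subseteq> {1..N}\<close>
    by (intro phase_abs_barrier[of i T t] drift less_imp_le[OF R_gt]) auto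
  then show "\<exists>\<delta>>0. \<forall>t. T \<le> t \<and> t \<le> T + \<delta> \<longrightarrow> (\<forall>i\<in>A. \<bar>\<theta> i t\<bar> \<le> m i)"
    using \<open>\<delta> > 0\<close> by blast
qed

lemma phase_bounded_oscillation:
  assumes "i \<in> {1..N}" "0 < \<alpha>" "\<alpha> < pi" and S_per: "\<And>x. S (x + 2 * pi) = S x"
    and S_\<alpha>: "S \<alpha> \<le> - s" "s \<le> S (- \<alpha>)" and "0 \<le> s" "0 \<le> \<rho>"
    and \<omega>_le: "\<bar>\<omega> i\<bar> \<le> \<kappa> * \<rho> * s"
    and R_ge: "\<And>t. 0 \<le> t \<Longrightarrow> \<rho> \<le> R t"
  shows "bdd_above (\<theta> i ` {0..}) \<and> bdd_below (\<theta> i ` {0..}) \<and>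
    (SUP t\<in>{0..}. \<theta> i t) - (INF t\<in>{0..}. \<theta> i t) < 2 * pi"
proof -
  interpret periodic_fun_simple S "2 * pi"
    by unfold_locales (rule S_per)
  have drift: "\<omega> i + \<kappa> * R u * S (\<alpha> + of_int k * (2 * pi)) \<le> 0"
    "0 \<le> \<omega> i + \<kappa> * R u * S (- \<alpha> + of_int k * (2 * pi))" if "0 \<le> u" for u k
  proof -
    have a: "0 \<le> \<kappa> * \<rho>" "\<kappa> * \<rho> \<le> \<kappa> * R u"
      using \<kappa>_nonneg \<open>0 \<le> \<rho>\<close> R_ge[OF that] by (simp_all add: mult_left_mono)
    show "\<omega> i + \<kappa> * R u * S (\<alpha> + of_int k * (2 * pi)) \<le> 0"
      unfolding plus_of_int by (rule restoring_drift_le[OF S_\<alpha>(1) \<open>0 \<le> s\<close> a \<omega>_le])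
    show "0 \<le> \<omega> i + \<kappa> * R u * S (- \<alpha> + of_int k * (2 * pi))"
      unfolding plus_of_int by (rule restoring_drift_ge[OF S_\<alpha>(2) \<open>0 \<le> s\<close> a \<omega>_le])
  qed
  have "\<exists>a b. b - a < 2 * pi \<and> (\<forall>t\<ge>0. a \<le> \<theta> i t \<and> \<theta> i t \<le> b)"
  proof (rule oscillation_between_periodic_barriers[OF continuous_on_phase[OF \<open>i \<in> {1..N}\<close>] \<open>0 < \<alpha>\<close> \<open>\<alpha> < pi\<close>])
    show "upper_barrier (\<theta> i) (\<alpha> + of_int k * (2 * pi))"
      and "lower_barrier (\<theta> i) (- \<alpha> + of_int k * (2 * pi))" for k
      unfolding upper_barrier_def lower_barrier_def
      using phase_upper_barrier[OF \<open>i \<in> {1..N}\<close>] phase_lower_barrier[OF \<open>i \<in> {1..N}\<close>] drift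
      by (meson order_trans)+
  qed
  then show ?thesis
    using SUP_minus_INF_less[of "{0..}" a "\<theta> i" b "2 * pi" for a b] by auto
qed

lemma coherent_group_confined:
  assumes "A \<subseteq> {1..N}" "0 \<le> p" "0 \<le> c1" "0 \<le> \<rho>" "0 < c3"
    and S_right: "\<And>x. \<alpha>0 \<le> x \<Longrightarrow> x \<le> pi \<Longrightarrow> S x \<le> - c1 * (pi - x) powr p"
    and S_left: "\<And>x. - pi \<le> x \<Longrightarrow> x \<le> - \<alpha>0 \<Longrightarrow> S x \<ge> c1 * (x + pi) powr p"
    and I_min: "\<And>x \<phi>. - pi \<le> x \<Longrightarrow> x \<le> pi \<Longrightarrow> \<bar>\<phi>\<bar> \<le> max \<bar>x\<bar> \<alpha>0 \<Longrightarrow> I \<phi> \<ge> c3 * I x"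
    and mass: "1 / real N * (\<Sum>i\<in>A. I (\<theta> i 0)) > \<rho> / c3"
    and d: "0 \<le> d" "d \<le> pi - \<alpha>0"
    and \<omega>_le: "\<And>i. i \<in> A \<Longrightarrow> \<bar>\<omega> i\<bar> \<le> \<kappa> * \<rho> * c1 * d powr p"
    and init: "\<And>i. i \<in> A \<Longrightarrow> - pi + d \<le> \<theta> i 0 \<and> \<theta> i 0 \<le> pi - d"
    and "0 \<le> t"
  shows "\<rho> < R t \<and> (\<forall>i\<in>A. - pi + d \<le> \<theta> i t \<and> \<theta> i t \<le> pi - d)"
proof -
  \<comment> \<open>inside [-m i, m i] the hypothesis on I keeps I (\<theta> i t) above c3 * I (\<theta> i 0)\<close>
  define m where "m i = max \<bar>\<theta> i 0\<bar> \<alpha>0" for i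
  have m: "\<alpha>0 \<le> m i" "m i \<le> pi - d" "\<bar>\<theta> i 0\<bar> \<le> m i" if "i \<in> A" for i
    using init[OF that] d by (auto simp: m_def)
  have coherent: "\<rho> < R t" if "\<forall>i\<in>A. \<bar>\<theta> i t\<bar> \<le> m i" for t
    unfolding R_def using d that
    by (intro mean_gt_of_shrunk_phases[OF I_nonneg I_min \<open>0 < c3\<close> \<open>A \<subseteq> {1..N}\<close> mass])
      (auto simp: m_def dest: init)
  have drift: "\<omega> i + \<kappa> * r * S (m i) \<le> 0 \<and> 0 \<le> \<omega> i + \<kappa> * r * S (- m i)"
    if "i \<in> A" "\<rho> \<le> r" for i r
  proof -
    have "c1 * d powr p \<le> c1 * (pi - m i) powr p"
      using m[OF \<open>i \<in> A\<close>] d \<open>0 \<le> p\<close> \<open>0 \<le> c1\<close> by (intro mult_left_mono powr_mono2) auto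
    then have "S (m i) \<le> - (c1 * d powr p)" "c1 * d powr p \<le> S (- m i)"
      using S_right[of "m i"] S_left[of "- m i"] m[OF \<open>i \<in> A\<close>] d by auto
    moreover have "\<bar>\<omega> i\<bar> \<le> (\<kappa> * \<rho>) * (c1 * d powr p)"
      using \<omega>_le[OF \<open>i \<in> A\<close>] by (simp add: mult.assoc)
    ultimately show ?thesis
      using \<kappa>_nonneg \<open>0 \<le> c1\<close> \<open>0 \<le> \<rho>\<close> \<open>\<rho> \<le> r\<close>
      by (intro conjI restoring_drift_le restoring_drift_ge) (auto intro: mult_left_mono)
  qed
  have "\<forall>i\<in>A. \<bar>\<theta> i t\<bar> \<le> m i"
    using phase_confinement[OF \<open>A \<subseteq> {1..N}\<close> m(3) coherent drift \<open>0 \<le> t\<close>] by blast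
  then show ?thesis
    using coherent m(2) by (force simp: abs_le_iff)
qed

end

lemma phase_modelI:
  assumes "\<exists>L. L-lipschitz_on UNIV S" and I_lip: "\<exists>L. L-lipschitz_on UNIV I"
    and I_per: "\<And>x. I (x + 2 * pi) = I x" and I_nonneg: "\<And>x. - pi \<le> x \<Longrightarrow> x \<le> pi \<Longrightarrow> 0 \<le> I x"
    and "0 \<le> \<kappa>"
    and "\<And>i t. i \<in> {1..N} \<Longrightarrow> 0 \<le> t \<Longrightarrow>
      (\<theta> i has_real_derivative (\<omega> i + \<kappa> / real N * (\<Sum>j\<in>{1..N}. I (\<theta> j t)) * S (\<theta> i t)))
        (at t within {0..})"
  shows "phase_model S I N \<omega> \<theta> \<kappa>"
proof
  show cont: "continuous_on UNIV I"
    using I_lip lipschitz_on_continuous_on by blast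
  have range: "range I = I ` {-pi..pi}"
    using I_per by (rule periodic_range_eq)
  show "0 \<le> I x" for x
  proof -
    obtain y where "y \<in> {-pi..pi}" "I x = I y"
      using range by (metis rangeI imageE)
    then show ?thesis
      using I_nonneg by simp
  qed
  have "compact (I ` {-pi..pi})"
    using cont by (intro compact_continuous_image continuous_on_subset[OF cont]) auto
  then show "bdd_above (range I)"
    unfolding range by (intro bounded_imp_bdd_above compact_imp_bounded)
qed (use assms in auto)

lemma coupling_threshold:
  fixes M \<kappa> \<rho> c1 \<alpha>0 p :: real
  assumes "0 \<le> M" "0 < \<rho>" "0 < c1" "\<alpha>0 < pi" "0 < p"
    and \<kappa>: "\<kappa> > M / (\<rho> * c1 * (pi - \<alpha>0) powr p)"
  shows "0 < \<kappa>" and "M \<le> \<kappa> * \<rho> * c1 * (pi - \<alpha>0) powr p"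
    and "(M / (\<kappa> * \<rho> * c1)) powr (1 / p) \<le> pi - \<alpha>0"
    and "\<kappa> * \<rho> * c1 * ((M / (\<kappa> * \<rho> * c1)) powr (1 / p)) powr p = M"
proof -
  have pos: "0 < \<rho> * c1 * (pi - \<alpha>0) powr p"
    using assms by simp
  then have "M < \<kappa> * (\<rho> * c1 * (pi - \<alpha>0) powr p)"
    using \<kappa> by (simp add: pos_divide_less_eq)
  then show "M \<le> \<kappa> * \<rho> * c1 * (pi - \<alpha>0) powr p"
    by (simp add: mult.assoc)
  show "0 < \<kappa>"
    using \<kappa> divide_nonneg_pos[OF \<open>0 \<le> M\<close> pos] by linarith
  then have "0 < \<kappa> * \<rho> * c1"
    using assms by simp
  with \<open>M \<le> \<kappa> * \<rho> * c1 * (pi - \<alpha>0) powr p\<close>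
  show "(M / (\<kappa> * \<rho> * c1)) powr (1 / p) \<le> pi - \<alpha>0"
    using assms by (intro powr_inverse_le) (auto simp: pos_divide_le_eq mult.commute)
  show "\<kappa> * \<rho> * c1 * ((M / (\<kappa> * \<rho> * c1)) powr (1 / p)) powr p = M"
    using \<open>0 < \<kappa>\<close> \<open>0 < \<kappa> * \<rho> * c1\<close> assms by (simp add: powr_powr)
qed

theorem proposition2p19:
  fixes S I :: "real \<Rightarrow> real"
    and \<alpha>0 p q c1 c2 c3 \<kappa> \<rho> :: real
    and N :: nat
    and \<omega> \<theta>0 :: "nat \<Rightarrow> real"
    and \<theta> :: "nat \<Rightarrow> real \<Rightarrow> real"
    and A B :: "nat set"
  assumes S_per: "\<And>x. S (x + 2 * pi) = S x"
    and I_per: "\<And>x. I (x + 2 * pi) = I x"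
    and S_lip: "\<exists>L. L-lipschitz_on UNIV S"
    and I_lip: "\<exists>L. L-lipschitz_on UNIV I"
    and \<alpha>0: "0 < \<alpha>0" "\<alpha>0 < pi"
    and pq: "p \<ge> 1" "q \<ge> 1"
    and cs: "c1 > 0" "c2 > 0" "0 < c3" "c3 \<le> 1"
    and S_right: "\<And>x. \<alpha>0 \<le> x \<Longrightarrow> x \<le> pi \<Longrightarrow> S x \<le> - c1 * (pi - x) powr p"
    and S_left: "\<And>x. - pi \<le> x \<Longrightarrow> x \<le> - \<alpha>0 \<Longrightarrow> S x \<ge> c1 * (x + pi) powr p"
    and I_bounds: "\<And>x. - pi \<le> x \<Longrightarrow> x \<le> pi \<Longrightarrow>
                     0 \<le> I x \<and> I x \<le> c2 * (pi - \<bar>x\<bar>) powr q"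
    and I_min: "\<And>x \<phi>. - pi \<le> x \<Longrightarrow> x \<le> pi \<Longrightarrow>
                     \<bar>\<phi>\<bar> \<le> max \<bar>x\<bar> \<alpha>0 \<Longrightarrow> I \<phi> \<ge> c3 * I x"
    and ode: "\<And>i t. i \<in> {1..N} \<Longrightarrow> t \<ge> 0 \<Longrightarrow>
               (\<theta> i has_real_derivative
                  (\<omega> i + \<kappa> / real N * (\<Sum>j\<in>{1..N}. I (\<theta> j t)) * S (\<theta> i t)))
               (at t within {0..})"
    and init: "\<And>i. i \<in> {1..N} \<Longrightarrow> \<theta> i 0 = \<theta>0 i"
    and \<rho>: "0 < \<rho>" "\<rho> \<le> (SUP x. \<bar>I x\<bar>)"
    and AB: "A \<subseteq> B" "B \<subseteq> {1..N}"
    and A_mass: "(1 / real N) * (\<Sum>i\<in>A. I (\<theta>0 i)) > \<rho> / c3"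
    and \<kappa>: "\<kappa> > Max ((\<lambda>i. \<bar>\<omega> i\<bar>) ` B) / (\<rho> * c1 * (pi - \<alpha>0) powr p)"
    and A_init: "\<And>i. i \<in> A \<Longrightarrow>
        - pi + (Max ((\<lambda>i. \<bar>\<omega> i\<bar>) ` B) / (\<kappa> * \<rho> * c1)) powr (1 / p) \<le> \<theta>0 i \<and>
        \<theta>0 i \<le> pi - (Max ((\<lambda>i. \<bar>\<omega> i\<bar>) ` B) / (\<kappa> * \<rho> * c1)) powr (1 / p)"
  shows "(\<forall>t\<ge>0. (1 / real N) * (\<Sum>j\<in>{1..N}. I (\<theta> j t)) > \<rho>)
       \<and> (\<forall>i\<in>A. \<forall>t\<ge>0.
            - pi + (Max ((\<lambda>i. \<bar>\<omega> i\<bar>) ` B) / (\<kappa> * \<rho> * c1)) powr (1 / p) \<le> \<theta> i t \<and>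
            \<theta> i t \<le> pi - (Max ((\<lambda>i. \<bar>\<omega> i\<bar>) ` B) / (\<kappa> * \<rho> * c1)) powr (1 / p))
       \<and> (\<forall>i\<in>B. bdd_above (\<theta> i ` {0..}) \<and> bdd_below (\<theta> i ` {0..}) \<and>
            (SUP t\<in>{0..}. \<theta> i t) - (INF t\<in>{0..}. \<theta> i t) < 2 * pi)"
proof -
  define M where "M = Max ((\<lambda>i. \<bar>\<omega> i\<bar>) ` B)"
  define d where "d = (M / (\<kappa> * \<rho> * c1)) powr (1 / p)"
  obtain a where "a \<in> A"
    using A_mass \<rho>(1) cs(3) by (force simp: divide_less_0_iff)
  have \<omega>_le: "\<bar>\<omega> i\<bar> \<le> M" if "i \<in> B" for i
    using that finite_subset[OF AB(2)] by (auto simp: M_def)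
  then have "0 \<le> M"
    using \<open>a \<in> A\<close> AB(1) by force
  note threshold = coupling_threshold[OF \<open>0 \<le> M\<close> \<rho>(1) cs(1) \<alpha>0(2) less_le_trans[OF zero_less_one pq(1)]
      \<kappa>[folded M_def], folded d_def]
  interpret phase_model S I N \<omega> \<theta> \<kappa>
    using phase_modelI[OF S_lip I_lip I_per _ _ ode] I_bounds threshold(1) by auto
  have coherent: "\<rho> < R t \<and> (\<forall>i\<in>A. - pi + d \<le> \<theta> i t \<and> \<theta> i t \<le> pi - d)" if "0 \<le> t" for t
  proof (rule coherent_group_confined[OF _ _ _ _ _ S_right S_left I_min _ _ _ _ _ that])
    show "1 / real N * (\<Sum>i\<in>A. I (\<theta> i 0)) > \<rho> / c3"
      using A_mass AB init by (simp add: subset_iff)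
  qed (use AB pq cs \<rho> threshold A_init init \<omega>_le in \<open>auto simp: d_def M_def\<close>)
  have bounded_oscillation: "bdd_above (\<theta> i ` {0..}) \<and> bdd_below (\<theta> i ` {0..}) \<and>
      (SUP t\<in>{0..}. \<theta> i t) - (INF t\<in>{0..}. \<theta> i t) < 2 * pi" if "i \<in> B" for i
    using S_right[of \<alpha>0] S_left[of "- \<alpha>0"] \<alpha>0 \<omega>_le[OF that] threshold(2) \<rho>(1) cs(1) coherent that AB(2)
    by (intro phase_bounded_oscillation[OF _ \<alpha>0 S_per, where s = "c1 * (pi - \<alpha>0) powr p" and \<rho> = \<rho>])
      (auto simp: mult.assoc intro: less_imp_le)
  show ?thesis
    unfolding M_def[symmetric] d_def[symmetric] R_def[symmetric] using coherent bounded_oscillation by simp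
qed

end
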